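(* Let $T$ be a tree with exactly three pendant vertices and a single major vertex $m$. Then $1$ is an eigenvalue of $L(T)$ of multiplicity exactly one if and only if the pendant vertices can be labelled $u_1,u_2,u_3$ so that either (A) $d(u_1,m)\equiv d(u_2,m)\equiv 1\pmod 3$ and $d(u_3,m)\not\equiv 1\pmod 3$; or (B) $d(u_1,m)\equiv 2$, $d(u_2,m)\equiv 0$ and $d(u_3,m)\equiv 0\pmod 3$.
   Context: $L(T)=D(T)-A(T)$ is the Laplacian matrix of $T$. A pendant vertex has degree $1$; a major vertex has degree at least $3$. $d$ denotes distance. *)

theory Defs
  imports "Jordan_Normal_Form.Char_Poly"
begin

definition simple_graph :: "nat \<Rightarrow> (nat \<Rightarrow> nat \<Rightarrow> bool) \<Rightarrow> bool" where
  "simple_graph n E \<longleftrightarrow> (\<forall>i j. E i j \<longrightarrow> i < n \<and> j < n) \<and>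
     (\<forall>i j. E i j \<longrightarrow> E j i) \<and> (\<forall>i. \<not> E i i)"

definition walk :: "(nat \<Rightarrow> nat \<Rightarrow> bool) \<Rightarrow> nat list \<Rightarrow> bool" where
  "walk E xs \<longleftrightarrow> xs \<noteq> [] \<and> (\<forall>k. Suc k < length xs \<longrightarrow> E (xs ! k) (xs ! Suc k))"

definition connected_graph :: "nat \<Rightarrow> (nat \<Rightarrow> nat \<Rightarrow> bool) \<Rightarrow> bool" where
  "connected_graph n E \<longleftrightarrow> (\<forall>u v. u < n \<and> v < n \<longrightarrow>
      (\<exists>xs. walk E xs \<and> hd xs = u \<and> last xs = v))"

definition has_cycle :: "(nat \<Rightarrow> nat \<Rightarrow> bool) \<Rightarrow> bool" where
  "has_cycle E \<longleftrightarrow> (\<exists>xs. length xs \<ge> 3 \<and> distinct xs \<and> walk E xs \<and> E (last xs) (hd xs))"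

definition is_tree :: "nat \<Rightarrow> (nat \<Rightarrow> nat \<Rightarrow> bool) \<Rightarrow> bool" where
  "is_tree n E \<longleftrightarrow> n \<ge> 1 \<and> simple_graph n E \<and> connected_graph n E \<and> \<not> has_cycle E"

definition degree :: "nat \<Rightarrow> (nat \<Rightarrow> nat \<Rightarrow> bool) \<Rightarrow> nat \<Rightarrow> nat" where
  "degree n E i = card {j. j < n \<and> E i j}"

definition pendant_vertices :: "nat \<Rightarrow> (nat \<Rightarrow> nat \<Rightarrow> bool) \<Rightarrow> nat set" where
  "pendant_vertices n E = {i. i < n \<and> degree n E i = 1}"

definition major_vertices :: "nat \<Rightarrow> (nat \<Rightarrow> nat \<Rightarrow> bool) \<Rightarrow> nat set" where
  "major_vertices n E = {i. i < n \<and> degree n E i \<ge> 3}"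

definition graph_dist :: "(nat \<Rightarrow> nat \<Rightarrow> bool) \<Rightarrow> nat \<Rightarrow> nat \<Rightarrow> nat" where
  "graph_dist E u v = (LEAST k. \<exists>xs. walk E xs \<and> hd xs = u \<and> last xs = v \<and> length xs = Suc k)"

definition laplacian :: "nat \<Rightarrow> (nat \<Rightarrow> nat \<Rightarrow> bool) \<Rightarrow> real mat" where
  "laplacian n E = mat n n (\<lambda>(i, j). (if i = j then real (degree n E i) else 0)
                                      - (if E i j then 1 else 0))"

definition eig_multiplicity :: "real mat \<Rightarrow> real \<Rightarrow> nat" where
  "eig_multiplicity A c = order c (char_poly A)"

end

theory Submission
  imports Defs "Jordan_Normal_Form.Jordan_Normal_Form_Existence" "Jordan_Normal_Form.Jordan_Normal_Form_Uniqueness"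
begin

text \<open>Since \<open>L\<close> is real symmetric, the multiplicity of the eigenvalue \<open>1\<close> is \<open>dim ker (L - I)\<close>.
  The tree is a spider: three legs run from \<open>m\<close> to the pendant vertices, of lengths
  \<open>d(u\<^sub>k, m)\<close>. Along a leg, \<open>(L - I) x = 0\<close> says \<open>x(j - 1) = x(j) - x(j + 1)\<close>, and at the pendant
  end \<open>x(end - 1) = 0\<close>; so on each leg a kernel vector is its value at the pendant end times the
  6-periodic sequence \<open>1, 0, -1, -1, 0, 1, \<dots>\<close> read backwards. The kernel is therefore
  parametrised by the three end values and the value at \<open>m\<close>, subject to four linear equations
  whose coefficients depend only on the leg lengths mod 3. Solving them case by case shows that
  the kernel is one-dimensional exactly in cases (A) and (B).\<close>

section \<open>Eigenvalue multiplicities of real symmetric matrices\<close>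

lemma sum_list_eq_if_map_min_2_eq_map_min_1:
  fixes xs :: "nat list"
  assumes "sum_list (map (min 2) xs) = sum_list (map (min 1) xs)"
  shows "sum_list xs = sum_list (map (min 1) xs)"
  using assms
proof (induction xs)
  case Nil then show ?case by simp
next
  case (Cons a xs)
  have "sum_list (map (min 2) xs) \<ge> sum_list (map (min 1) xs)"
    by (induction xs) (auto intro: add_mono)
  with Cons.prems have "min 2 a = min 1 a" "sum_list (map (min 2) xs) = sum_list (map (min 1) xs)"
    by auto
  with Cons.IH show ?case by auto
qed

text \<open>The argument is that of the Hermitian case: \<open>w = M v\<close> satisfies
  \<open>\<Sum>\<^sub>i |w\<^sub>i|\<^sup>2 = \<langle>M v, w\<rangle> = \<langle>v, M w\<rangle> = 0\<close>.\<close>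

lemma real_symmetric_mult_mult_vec_eq_0D:
  fixes M :: "complex mat"
  assumes M: "M \<in> carrier_mat n n"
    and sym: "\<And>i j. i < n \<Longrightarrow> j < n \<Longrightarrow> M $$ (i,j) = M $$ (j,i)"
    and real: "\<And>i j. i < n \<Longrightarrow> j < n \<Longrightarrow> cnj (M $$ (i,j)) = M $$ (i,j)"
    and v: "v \<in> carrier_vec n" and MMv: "M *\<^sub>v (M *\<^sub>v v) = 0\<^sub>v n"
  shows "M *\<^sub>v v = 0\<^sub>v n"
proof -
  define w where "w = M *\<^sub>v v"
  have w: "w \<in> carrier_vec n" unfolding w_def using M v by auto
  have w_nth: "w $ i = (\<Sum>j<n. M $$ (i,j) * v $ j)" if "i < n" for i
    unfolding w_def using M v that by (auto simp: scalar_prod_def row_def lessThan_atLeast0)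
  have Mw: "(\<Sum>i<n. M $$ (j,i) * w $ i) = 0" if "j < n" for j
  proof -
    have "(M *\<^sub>v w) $ j = 0" using MMv that M unfolding w_def by simp
    thus ?thesis using M w that by (auto simp: scalar_prod_def row_def lessThan_atLeast0)
  qed
  have "(\<Sum>i<n. w $ i * cnj (w $ i)) = (\<Sum>i<n. \<Sum>j<n. M $$ (i,j) * v $ j * cnj (w $ i))"
    by (simp add: w_nth sum_distrib_right)
  also have "\<dots> = (\<Sum>j<n. \<Sum>i<n. M $$ (i,j) * v $ j * cnj (w $ i))"
    by (rule sum.swap)
  also have "\<dots> = (\<Sum>j<n. v $ j * cnj (\<Sum>i<n. M $$ (j,i) * w $ i))"
  proof (rule sum.cong[OF refl])
    fix j assume j: "j \<in> {..<n}"
    have "cnj (M $$ (j,i)) = M $$ (i,j)" if "i \<in> {..<n}" for i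
      using real[of j i] sym[of j i] that j by simp
    then show "(\<Sum>i<n. M $$ (i,j) * v $ j * cnj (w $ i)) = v $ j * cnj (\<Sum>i<n. M $$ (j,i) * w $ i)"
      by (simp add: cnj_sum sum_distrib_left mult_ac)
  qed
  also have "\<dots> = 0" using Mw by simp
  finally have "(\<Sum>i<n. w $ i * cnj (w $ i)) = 0" .
  moreover have "(\<Sum>i<n. w $ i * cnj (w $ i)) = of_real (\<Sum>i<n. (cmod (w $ i))\<^sup>2)"
    by (simp add: complex_norm_square del: of_real_power)
  ultimately have "(\<Sum>i<n. (cmod (w $ i))\<^sup>2) = 0" by (metis of_real_eq_0_iff)
  hence "w $ i = 0" if "i < n" for i
    using that sum_nonneg_eq_0_iff[of "{..<n}" "\<lambda>i. (cmod (w $ i))\<^sup>2"] by auto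
  thus ?thesis using w unfolding w_def[symmetric] by (intro eq_vecI) auto
qed

lemma mat_kernel_mult_self_real_symmetric:
  fixes M :: "complex mat"
  assumes M: "M \<in> carrier_mat n n"
    and sym: "\<And>i j. i < n \<Longrightarrow> j < n \<Longrightarrow> M $$ (i,j) = M $$ (j,i)"
    and real: "\<And>i j. i < n \<Longrightarrow> j < n \<Longrightarrow> cnj (M $$ (i,j)) = M $$ (i,j)"
  shows "mat_kernel (M * M) = mat_kernel M"
proof (intro equalityI subsetI)
  fix v assume "v \<in> mat_kernel (M * M)"
  hence v: "v \<in> carrier_vec n" and "M *\<^sub>v (M *\<^sub>v v) = 0\<^sub>v n"
    using M mat_kernelD[of "M * M" n n v] by (auto simp: assoc_mult_mat_vec)
  from real_symmetric_mult_mult_vec_eq_0D[OF M sym real this] have "M *\<^sub>v v = 0\<^sub>v n" .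
  thus "v \<in> mat_kernel M" using v M by (auto intro: mat_kernelI)
next
  fix v assume "v \<in> mat_kernel M"
  hence v: "v \<in> carrier_vec n" and "M *\<^sub>v v = 0\<^sub>v n" using mat_kernelD[OF M] by auto
  moreover have "M *\<^sub>v 0\<^sub>v n = 0\<^sub>v n" using M by (intro eq_vecI) auto
  ultimately have "(M * M) *\<^sub>v v = 0\<^sub>v n" using M by (simp add: assoc_mult_mat_vec)
  thus "v \<in> mat_kernel (M * M)" using v M by (auto intro: mat_kernelI)
qed

text \<open>If the kernels of \<open>A - c I\<close> and \<open>(A - c I)\<^sup>2\<close> agree, all Jordan blocks of \<open>A\<close> for \<open>c\<close> have
  size one, so the algebraic multiplicity of \<open>c\<close> is the geometric one.\<close>

lemma order_char_poly_eq_kernel_dim: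
  fixes A :: "complex mat"
  assumes A: "A \<in> carrier_mat n n"
    and kernel_square: "mat_kernel (char_matrix A c * char_matrix A c) = mat_kernel (char_matrix A c)"
  shows "Polynomial.order c (char_poly A) = kernel_dim (char_matrix A c)"
proof -
  obtain as where "char_poly A = (\<Prod>a \<leftarrow> as. [:- a, 1:])" using char_poly_factorized[OF A] by auto
  from jordan_nf_exists[OF A this] obtain n_as where jnf: "jordan_nf A n_as" by auto
  define xs where "xs = map fst [(n, e)\<leftarrow>n_as . e = c]"
  have order_xs: "Polynomial.order c (char_poly A) = sum_list xs"
    unfolding jordan_nf_order[OF jnf] xs_def by (induction n_as) auto
  have dim_xs: "dim_gen_eigenspace A c k = sum_list (map (min k) xs)" for k
    unfolding dim_gen_eigenspace[OF jnf] xs_def by simp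
  have M: "char_matrix A c \<in> carrier_mat n n" using A by simp
  have "dim_gen_eigenspace A c 2 = dim_gen_eigenspace A c 1"
    using M kernel_square unfolding dim_gen_eigenspace_def kernel_dim_def by (simp add: numeral_2_eq_2)
  hence "sum_list xs = dim_gen_eigenspace A c 1"
    unfolding dim_xs by (rule sum_list_eq_if_map_min_2_eq_map_min_1)
  also have "\<dots> = kernel_dim (char_matrix A c)"
    using M unfolding dim_gen_eigenspace_def by simp
  finally show ?thesis unfolding order_xs .
qed

lemma order_char_poly_real_symmetric:
  fixes A :: "real mat"
  assumes A: "A \<in> carrier_mat n n"
    and sym: "\<And>i j. i < n \<Longrightarrow> j < n \<Longrightarrow> A $$ (i,j) = A $$ (j,i)"
  shows "Polynomial.order c (char_poly A) = kernel_dim (char_matrix (map_mat complex_of_real A) (complex_of_real c))"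
proof -
  interpret of_real_poly_hom: map_poly_inj_idom_divide_hom complex_of_real ..
  define B where "B = map_mat complex_of_real A"
  define M where "M = char_matrix B (complex_of_real c)"
  have B: "B \<in> carrier_mat n n" unfolding B_def using A by auto
  have M: "M \<in> carrier_mat n n" unfolding M_def using B by auto
  have M_nth: "M $$ (i,j) = complex_of_real (A $$ (i,j) - (if i = j then c else 0))"
    if "i < n" "j < n" for i j
    using that A unfolding M_def B_def char_matrix_def by auto
  have "Polynomial.order c (char_poly A) =
      Polynomial.order (complex_of_real c) (map_poly complex_of_real (char_poly A))"
    by (rule of_real_poly_hom.order_hom[symmetric])
  also have "map_poly complex_of_real (char_poly A) = char_poly B"
    unfolding B_def by (rule of_real_hom.char_poly_hom[symmetric, OF A])
  also have "Polynomial.order (complex_of_real c) (char_poly B) = kernel_dim M"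
    unfolding M_def
    by (rule order_char_poly_eq_kernel_dim[OF B mat_kernel_mult_self_real_symmetric])
      (use M M_nth sym in \<open>auto simp: M_def[symmetric]\<close>)
  finally show ?thesis unfolding M_def B_def .
qed

context kernel
begin

lemma fin_dim_Ker: "Ker.fin_dim"
proof -
  obtain B where "finite B" "basis B" using kernel_basis_exists[OF A] by auto
  thus ?thesis unfolding Ker.fin_dim_def Ker.basis_def by auto
qed

lemma dim_le_card_spanning:
  assumes "finite S" "S \<subseteq> mat_kernel A" "mat_kernel A \<subseteq> span S"
  shows "dim \<le> card S"
proof -
  have "span S \<subseteq> mat_kernel A" using assms by (intro Ker.span_is_subset2) auto
  with assms have "span S = mat_kernel A" by auto
  with Ker.gen_ge_dim[OF assms(1,2)] show ?thesis by auto
qed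

lemma card_le_dim_lin_indpt:
  assumes "S \<subseteq> mat_kernel A" "\<not> lin_dep S"
  shows "card S \<le> dim"
  using Ker.li_le_dim[OF fin_dim_Ker assms] by auto

lemma lin_dep_nth:
  assumes "lin_dep S" "S \<subseteq> mat_kernel A"
  obtains U a u where "finite U" "U \<subseteq> S" "u \<in> U" "a u \<noteq> 0"
    "\<And>i. i < nc \<Longrightarrow> (\<Sum>x\<in>U. a x * x $ i) = 0"
proof -
  from assms(1) obtain U a u where U: "finite U" "U \<subseteq> S" "lincomb a U = 0\<^sub>v nc" "u \<in> U" "a u \<noteq> 0"
    unfolding Ker.lin_dep_def by auto
  have "(\<Sum>x\<in>U. a x * x $ i) = 0" if i: "i < nc" for i
  proof -
    have "lincomb a U $ i = (\<Sum>x\<in>U. a x * x $ i)"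
      by (rule lincomb_index[OF i]) (use U assms(2) in auto)
    thus ?thesis using U(3) i by simp
  qed
  with U that show ?thesis by blast
qed

end

lemma kernel_dim_eq_0I:
  fixes A :: "'a :: field mat"
  assumes A: "A \<in> carrier_mat n n"
    and trivial: "\<And>v. v \<in> carrier_vec n \<Longrightarrow> A *\<^sub>v v = 0\<^sub>v n \<Longrightarrow> v = 0\<^sub>v n"
  shows "kernel_dim A = 0"
proof -
  interpret kernel n n A by (unfold_locales, rule A)
  have "mat_kernel A \<subseteq> span {}"
  proof
    fix v assume "v \<in> mat_kernel A"
    hence "v = 0\<^sub>v n" using trivial mat_kernelD[OF A] by auto
    thus "v \<in> span {}" by (metis Ker.span_empty singletonI)
  qed
  from dim_le_card_spanning[OF _ _ this] show ?thesis using A by simp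
qed

lemma kernel_dim_eq_1I:
  fixes A :: "'a :: field mat"
  assumes A: "A \<in> carrier_mat n n"
    and v: "v \<in> carrier_vec n" "A *\<^sub>v v = 0\<^sub>v n" and i: "i < n" "v $ i \<noteq> 0"
    and multiple: "\<And>w. w \<in> carrier_vec n \<Longrightarrow> A *\<^sub>v w = 0\<^sub>v n \<Longrightarrow> \<exists>c. w = c \<cdot>\<^sub>v v"
  shows "kernel_dim A = 1"
proof -
  interpret kernel n n A by (unfold_locales, rule A)
  have v_ker: "v \<in> mat_kernel A" using v A by (auto intro: mat_kernelI)
  have "mat_kernel A \<subseteq> span {v}"
  proof
    fix w assume "w \<in> mat_kernel A"
    then obtain c where "w = c \<cdot>\<^sub>v v" using multiple mat_kernelD[OF A] by blast
    also have "c \<cdot>\<^sub>v v = lincomb (\<lambda>_. c) {v}"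
      unfolding Ker.lincomb_def using v_ker by simp
    finally show "w \<in> span {v}" unfolding Ker.span_def by blast
  qed
  from dim_le_card_spanning[OF _ _ this] v_ker have "dim \<le> 1" by auto
  moreover have "\<not> lin_dep {v}"
  proof
    assume "lin_dep {v}"
    then obtain U a u where U: "U \<subseteq> {v}" "u \<in> U" "a u \<noteq> 0" "\<And>i. i < n \<Longrightarrow> (\<Sum>x\<in>U. a x * x $ i) = 0"
      using v_ker by (elim lin_dep_nth) auto
    hence "U = {v}" "u = v" by auto
    with U(3) U(4)[OF i(1)] i(2) show False by simp
  qed
  with card_le_dim_lin_indpt[of "{v}"] v_ker have "1 \<le> dim" by auto
  ultimately show ?thesis using A by simp
qed

lemma kernel_dim_ge_2I:
  fixes A :: "'a :: field mat"
  assumes A: "A \<in> carrier_mat n n"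
    and v: "v \<in> carrier_vec n" "A *\<^sub>v v = 0\<^sub>v n"
    and w: "w \<in> carrier_vec n" "A *\<^sub>v w = 0\<^sub>v n"
    and ij: "i < n" "j < n" "v $ i \<noteq> 0" "w $ i = 0" "v $ j = 0" "w $ j \<noteq> 0"
  shows "2 \<le> kernel_dim A"
proof -
  interpret kernel n n A by (unfold_locales, rule A)
  have v_ker: "v \<in> mat_kernel A" using v A by (auto intro: mat_kernelI)
  have w_ker: "w \<in> mat_kernel A" using w A by (auto intro: mat_kernelI)
  have "v \<noteq> w" using ij by auto
  moreover have "\<not> lin_dep {v, w}"
  proof
    assume "lin_dep {v, w}"
    then obtain U a u where U: "U \<subseteq> {v, w}" "u \<in> U" "a u \<noteq> 0"
      "\<And>i. i < n \<Longrightarrow> (\<Sum>x\<in>U. a x * x $ i) = 0"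
      using v_ker w_ker by (elim lin_dep_nth) auto
    have "U = {v} \<or> U = {w} \<or> U = {v, w}" "u = v \<or> u = w" using U(1,2) by auto
    thus False using U(2,3) U(4)[OF ij(1)] U(4)[OF ij(2)] ij \<open>v \<noteq> w\<close> by auto
  qed
  ultimately have "2 \<le> dim" using card_le_dim_lin_indpt[of "{v, w}"] v_ker w_ker by auto
  thus ?thesis using A by simp
qed

section \<open>Trees with a unique major vertex\<close>

definition neighbours :: "nat \<Rightarrow> (nat \<Rightarrow> nat \<Rightarrow> bool) \<Rightarrow> nat \<Rightarrow> nat set" where
  "neighbours n E v = {j. j < n \<and> E v j}"

lemma finite_neighbours [simp]: "finite (neighbours n E v)"
  unfolding neighbours_def by auto

lemma degree_eq_card_neighbours: "degree n E v = card (neighbours n E v)"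
  unfolding degree_def neighbours_def ..

locale sgraph =
  fixes n :: nat and E :: "nat \<Rightarrow> nat \<Rightarrow> bool"
  assumes simple: "simple_graph n E"
begin

lemma edge_lt: "E i j \<Longrightarrow> i < n \<and> j < n"
  using simple unfolding simple_graph_def by auto

lemma edge_sym: "E i j \<Longrightarrow> E j i"
  using simple unfolding simple_graph_def by auto

lemma not_edge_refl: "\<not> E i i"
  using simple unfolding simple_graph_def by auto

lemma mem_neighbours_iff: "j \<in> neighbours n E v \<longleftrightarrow> E v j"
  unfolding neighbours_def using edge_lt by auto

lemma laplacian_carrier: "laplacian n E \<in> carrier_mat n n"
  unfolding laplacian_def by simp

lemma laplacian_symmetric: "i < n \<Longrightarrow> j < n \<Longrightarrow> laplacian n E $$ (i, j) = laplacian n E $$ (j, i)"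
  unfolding laplacian_def using edge_sym by auto

end

fun second_order_seq :: "('a \<Rightarrow> 'a \<Rightarrow> 'a) \<Rightarrow> 'a \<Rightarrow> 'a \<Rightarrow> nat \<Rightarrow> 'a" where
  "second_order_seq f a b 0 = a"
| "second_order_seq f a b (Suc 0) = b"
| "second_order_seq f a b (Suc (Suc k)) = f (second_order_seq f a b k) (second_order_seq f a b (Suc k))"

locale unique_major_tree =
  fixes n :: nat and E :: "nat \<Rightarrow> nat \<Rightarrow> bool" and m :: nat
  assumes tree: "is_tree n E" and unique_major: "major_vertices n E = {m}"
begin

sublocale sgraph n E
  using tree unfolding is_tree_def by unfold_locales auto

abbreviation "N \<equiv> neighbours n E"
abbreviation "deg \<equiv> degree n E"

lemma connected: "connected_graph n E" and acyclic: "\<not> has_cycle E"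
  using tree unfolding is_tree_def by auto

lemma centre_lt: "m < n" and degree_centre_ge_3: "3 \<le> deg m"
  using unique_major unfolding major_vertices_def by auto

lemma degree_le_2: "v < n \<Longrightarrow> v \<noteq> m \<Longrightarrow> deg v \<le> 2"
  using unique_major unfolding major_vertices_def by fastforce

lemma degree_pos: assumes "v < n" shows "1 \<le> deg v"
proof (cases "v = m")
  case True thus ?thesis using degree_centre_ge_3 by simp
next
  case False
  from connected assms centre_lt obtain xs where xs: "walk E xs" "hd xs = v" "last xs = m"
    unfolding connected_graph_def by blast
  have "xs \<noteq> []" using xs unfolding walk_def by auto
  moreover have "length xs \<noteq> 1" using xs False by (cases xs) auto
  ultimately have "Suc 0 < length xs" by (cases xs) auto
  hence "E (xs ! 0) (xs ! 1)" using xs unfolding walk_def by auto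
  moreover have "xs ! 0 = v" using xs \<open>xs \<noteq> []\<close> by (simp add: hd_conv_nth)
  ultimately have "xs ! 1 \<in> N v" using mem_neighbours_iff by auto
  thus ?thesis unfolding degree_eq_card_neighbours by (auto simp: Suc_le_eq card_gt_0_iff)
qed

lemma no_closed_path:
  assumes "3 \<le> K" "inj_on c {0..<K}" "\<And>t. Suc t < K \<Longrightarrow> E (c t) (c (Suc t))" "E (c (K - 1)) (c 0)"
  shows False
proof -
  define xs where "xs = map c [0..<K]"
  have "length xs \<ge> 3" "distinct xs" using assms unfolding xs_def by (auto simp: distinct_map)
  moreover have "walk E xs" unfolding walk_def xs_def using assms by auto
  moreover have "E (last xs) (hd xs)" unfolding xs_def using assms by (simp add: last_map hd_map)
  ultimately show False using acyclic unfolding has_cycle_def by blast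
qed

text \<open>The walk from \<open>m\<close> through its neighbour \<open>w\<close> that never turns straight back. It is a path
  up to its first vertex of degree \<open>\<noteq> 2\<close>, at index \<open>leg_length w\<close>, and that vertex is pendant.\<close>

definition next_vertex :: "nat \<Rightarrow> nat \<Rightarrow> nat" where
  "next_vertex p v = (SOME z. z < n \<and> E v z \<and> z \<noteq> p)"

definition leg :: "nat \<Rightarrow> nat \<Rightarrow> nat" where
  "leg w = second_order_seq next_vertex m w"

lemma leg_0 [simp]: "leg w 0 = m" and leg_1 [simp]: "leg w (Suc 0) = w"
  and leg_Suc_Suc: "leg w (Suc (Suc k)) = next_vertex (leg w k) (leg w (Suc k))"
  unfolding leg_def by auto

definition leg_prefix :: "nat \<Rightarrow> nat \<Rightarrow> bool" where
  "leg_prefix w k \<longleftrightarrow> (\<forall>i\<le>k. leg w i < n) \<and> inj_on (leg w) {0..k} \<and>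
      (\<forall>i<k. E (leg w i) (leg w (Suc i))) \<and> (\<forall>i. 1 \<le> i \<and> i < k \<longrightarrow> deg (leg w i) = 2)"

lemma leg_prefix_1: assumes "w \<in> N m" shows "leg_prefix w 1"
proof -
  have "E m w" using assms mem_neighbours_iff by auto
  hence "w < n" "m \<noteq> w" using edge_lt not_edge_refl by auto
  moreover have "{0..1::nat} = {0, 1}" by auto
  ultimately show ?thesis unfolding leg_prefix_def using centre_lt \<open>E m w\<close>
    by (auto simp: le_Suc_eq)
qed

lemma leg_prefix_Suc:
  assumes prefix: "leg_prefix w k" and k: "1 \<le> k" and degree: "deg (leg w k) = 2"
  shows "leg_prefix w (Suc k)"
proof -
  obtain k' where k': "k = Suc k'" using k by (cases k) auto
  have inj: "inj_on (leg w) {0..k}" using prefix unfolding leg_prefix_def by auto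
  have "\<exists>z. z < n \<and> E (leg w k) z \<and> z \<noteq> leg w k'"
  proof (rule ccontr)
    assume "\<not> ?thesis"
    hence "N (leg w k) \<subseteq> {leg w k'}" unfolding neighbours_def by auto
    hence "card (N (leg w k)) \<le> 1" using card_mono[of "{leg w k'}"] by fastforce
    thus False using degree degree_eq_card_neighbours by simp
  qed
  hence next_leg: "leg w (Suc k) < n \<and> E (leg w k) (leg w (Suc k)) \<and> leg w (Suc k) \<noteq> leg w k'"
    unfolding k' leg_Suc_Suc next_vertex_def by (rule someI_ex)
  have "leg w (Suc k) \<notin> leg w ` {0..k}"
  proof
    assume "leg w (Suc k) \<in> leg w ` {0..k}"
    then obtain i where i: "i \<le> k" "leg w (Suc k) = leg w i" by auto
    have "i \<noteq> k" using next_leg i not_edge_refl by metis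
    moreover have "i \<noteq> k'" using next_leg i by auto
    ultimately have ik: "i + 2 \<le> k" using i k' by auto
    define c where "c t = leg w (i + t)" for t
    show False
    proof (rule no_closed_path[of "k - i + 1" c])
      show "3 \<le> k - i + 1" using ik by auto
      show "inj_on c {0..<k - i + 1}"
      proof (rule inj_onI)
        fix a b assume "a \<in> {0..<k - i + 1}" "b \<in> {0..<k - i + 1}" "c a = c b"
        hence "i + a \<in> {0..k}" "i + b \<in> {0..k}" "leg w (i + a) = leg w (i + b)"
          using ik unfolding c_def by auto
        from inj_onD[OF inj this(3,1,2)] show "a = b" by simp
      qed
      show "E (c t) (c (Suc t))" if "Suc t < k - i + 1" for t
        using prefix that unfolding leg_prefix_def c_def by auto
      show "E (c (k - i + 1 - 1)) (c 0)" unfolding c_def using next_leg i ik by simp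
    qed
  qed
  then show ?thesis using prefix next_leg degree
    unfolding leg_prefix_def by (auto simp: le_Suc_eq less_Suc_eq atLeastAtMostSuc_conv)
qed

lemma leg_prefixI:
  assumes w: "w \<in> N m" and k: "1 \<le> k" and degree: "\<And>i. 1 \<le> i \<Longrightarrow> i < k \<Longrightarrow> deg (leg w i) = 2"
  shows "leg_prefix w k"
  using k degree
proof (induction k rule: dec_induct)
  case base then show ?case using leg_prefix_1[OF w] by simp
next
  case (step k)
  then show ?case using leg_prefix_Suc[of w k] by auto
qed

lemma leg_prefix_lt: assumes "leg_prefix w k" shows "k < n"
proof -
  have "inj_on (leg w) {0..k}" "leg w ` {0..k} \<subseteq> {0..<n}"
    using assms unfolding leg_prefix_def by auto
  hence "card {0..k} \<le> card {0..<n}"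
    by (metis card_image card_mono finite_atLeastLessThan)
  thus ?thesis by simp
qed

definition leg_length :: "nat \<Rightarrow> nat" where
  "leg_length w = (LEAST k. 1 \<le> k \<and> deg (leg w k) \<noteq> 2)"

lemma
  assumes w: "w \<in> N m"
  shows leg_length_pos: "1 \<le> leg_length w"
    and degree_leg_length: "deg (leg w (leg_length w)) \<noteq> 2"
    and degree_leg_less_leg_length: "\<And>i. 1 \<le> i \<Longrightarrow> i < leg_length w \<Longrightarrow> deg (leg w i) = 2"
proof -
  have "\<exists>k. 1 \<le> k \<and> deg (leg w k) \<noteq> 2"
    using leg_prefixI[OF w, of n] leg_prefix_lt centre_lt by force
  from LeastI_ex[OF this] show "1 \<le> leg_length w" "deg (leg w (leg_length w)) \<noteq> 2"
    unfolding leg_length_def by auto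
  show "deg (leg w i) = 2" if "1 \<le> i" "i < leg_length w" for i
    using not_less_Least[of i "\<lambda>k. 1 \<le> k \<and> deg (leg w k) \<noteq> 2"] that unfolding leg_length_def by auto
qed

lemma leg_prefix_leg_length: "w \<in> N m \<Longrightarrow> leg_prefix w (leg_length w)"
  using leg_prefixI leg_length_pos degree_leg_less_leg_length by blast

lemma leg_lt: "w \<in> N m \<Longrightarrow> i \<le> leg_length w \<Longrightarrow> leg w i < n"
  using leg_prefix_leg_length unfolding leg_prefix_def by auto

lemma leg_inj:
  assumes "w \<in> N m" "i \<le> leg_length w" "j \<le> leg_length w" "leg w i = leg w j"
  shows "i = j"
  using leg_prefix_leg_length[OF assms(1)] assms(2-4) unfolding leg_prefix_def by (auto dest: inj_onD)

lemma leg_edge: "w \<in> N m \<Longrightarrow> i < leg_length w \<Longrightarrow> E (leg w i) (leg w (Suc i))"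
  using leg_prefix_leg_length unfolding leg_prefix_def by auto

lemma leg_ne_centre: "w \<in> N m \<Longrightarrow> 1 \<le> i \<Longrightarrow> i \<le> leg_length w \<Longrightarrow> leg w i \<noteq> m"
  using leg_inj[of w i 0] by auto

lemma degree_leg_end: assumes w: "w \<in> N m" shows "deg (leg w (leg_length w)) = 1"
proof -
  have "leg w (leg_length w) < n" "leg w (leg_length w) \<noteq> m"
    using leg_lt[OF w] leg_ne_centre[OF w leg_length_pos[OF w]] by auto
  with degree_pos degree_le_2 degree_leg_length[OF w] show ?thesis by force
qed

lemma neighbours_leg_interior:
  assumes w: "w \<in> N m" and j: "1 \<le> j" "j < leg_length w"
  shows "N (leg w j) = {leg w (j - 1), leg w (Suc j)}"
proof -
  have "{leg w (j - 1), leg w (Suc j)} \<subseteq> N (leg w j)"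
    using leg_edge[OF w, of "j - 1"] leg_edge[OF w, of j] j edge_sym by (auto simp: mem_neighbours_iff)
  moreover have "j - 1 \<le> leg_length w" "Suc j \<le> leg_length w" using j by auto
  hence "leg w (j - 1) \<noteq> leg w (Suc j)" using leg_inj[OF w] by fastforce
  moreover have "card (N (leg w j)) = 2"
    using degree_leg_less_leg_length[OF w j] degree_eq_card_neighbours by simp
  ultimately show ?thesis by (metis card_2_iff card_subset_eq finite_neighbours)
qed

lemma neighbours_leg_end:
  assumes w: "w \<in> N m"
  shows "N (leg w (leg_length w)) = {leg w (leg_length w - 1)}"
proof -
  have "{leg w (leg_length w - 1)} \<subseteq> N (leg w (leg_length w))"
    using leg_edge[OF w, of "leg_length w - 1"] leg_length_pos[OF w] edge_sym
    by (auto simp: mem_neighbours_iff)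
  moreover have "card (N (leg w (leg_length w))) = 1"
    using degree_leg_end[OF w] degree_eq_card_neighbours by simp
  ultimately show ?thesis by (metis card_subset_eq finite_neighbours is_singletonI is_singleton_altdef)
qed

text \<open>Going out along the leg through \<open>w\<close> up to its first vertex on the leg through \<open>w'\<close> and
  back to \<open>m\<close> along the latter visits no vertex twice.\<close>

lemma inj_on_legs_loop:
  assumes w: "w \<in> N m" and w': "w' \<in> N m"
    and i0: "1 \<le> i0" "i0 \<le> leg_length w" and j0: "1 \<le> j0" "j0 \<le> leg_length w'"
    and meet: "leg w i0 = leg w' j0"
    and first: "\<And>i j. 1 \<le> i \<Longrightarrow> i < i0 \<Longrightarrow> 1 \<le> j \<Longrightarrow> j \<le> leg_length w' \<Longrightarrow> leg w i \<noteq> leg w' j"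
  shows "inj_on (\<lambda>t. if t \<le> i0 then leg w t else leg w' (i0 + j0 - t)) {0..<i0 + j0}"
proof -
  define c where "c = (\<lambda>t. if t \<le> i0 then leg w t else leg w' (i0 + j0 - t))"
  have c_first: "c t = leg w t" if "t \<le> i0" for t
    using that unfolding c_def by simp
  have c_second: "c t = leg w' (i0 + j0 - t)" if "i0 \<le> t" for t
    using that meet unfolding c_def by auto
  have less: "a = b" if ab: "a < b" "b < i0 + j0" "c a = c b" for a b
  proof (cases "b \<le> i0")
    case True
    then show ?thesis using ab c_first leg_inj[OF w, of a b] i0 by auto
  next
    case False
    hence b: "1 \<le> i0 + j0 - b" "i0 + j0 - b < j0" "i0 + j0 - b \<le> leg_length w'"
      using ab j0 by auto
    have c_a: "c a = leg w' (i0 + j0 - b)" using ab(3) c_second False by simp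
    consider "i0 < a" | "a = 0" | "a = i0" | "0 < a" "a < i0" by linarith
    then show ?thesis
    proof cases
      case 1
      hence "leg w' (i0 + j0 - a) = leg w' (i0 + j0 - b)" using c_a c_second by simp
      thus ?thesis using leg_inj[OF w', of "i0 + j0 - a" "i0 + j0 - b"] b j0 1 ab by auto
    next
      case 2
      hence "leg w' (i0 + j0 - b) = m" using c_a c_first by simp
      thus ?thesis using leg_ne_centre[OF w' b(1,3)] by simp
    next
      case 3
      hence "leg w' j0 = leg w' (i0 + j0 - b)" using c_a c_first meet by simp
      thus ?thesis using leg_inj[OF w' j0(2) b(3)] b(2) by simp
    next
      case 4
      hence "leg w a = leg w' (i0 + j0 - b)" using c_a c_first by simp
      thus ?thesis using first[OF _ 4(2) b(1,3)] 4(1) by simp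
    qed
  qed
  have "inj_on c {0..<i0 + j0}"
  proof (rule inj_onI)
    fix a b assume "a \<in> {0..<i0 + j0}" "b \<in> {0..<i0 + j0}" "c a = c b"
    then show "a = b" using less[of a b] less[of b a] by (cases a b rule: linorder_cases) auto
  qed
  then show ?thesis unfolding c_def .
qed

lemma legs_disjoint:
  assumes w: "w \<in> N m" and w': "w' \<in> N m" and "w \<noteq> w'"
    and "1 \<le> i" "i \<le> leg_length w" "1 \<le> j" "j \<le> leg_length w'" "leg w i = leg w' j"
  shows False
proof -
  define Q where "Q i \<longleftrightarrow> 1 \<le> i \<and> i \<le> leg_length w \<and>
    (\<exists>j. 1 \<le> j \<and> j \<le> leg_length w' \<and> leg w i = leg w' j)" for i
  have "Q i" unfolding Q_def using assms by auto
  define i0 where "i0 = (LEAST i. Q i)"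
  have "Q i0" unfolding i0_def by (rule LeastI[of Q, OF \<open>Q i\<close>])
  then obtain j0 where i0: "1 \<le> i0" "i0 \<le> leg_length w" and j0: "1 \<le> j0" "j0 \<le> leg_length w'"
    and meet: "leg w i0 = leg w' j0" unfolding Q_def by auto
  have first: "leg w a \<noteq> leg w' b" if "1 \<le> a" "a < i0" "1 \<le> b" "b \<le> leg_length w'" for a b
  proof
    assume "leg w a = leg w' b"
    with that i0 have "Q a" unfolding Q_def by auto
    with not_less_Least[of a Q] \<open>a < i0\<close> show False unfolding i0_def by auto
  qed
  define K where "K = i0 + j0"
  define c where "c t = (if t \<le> i0 then leg w t else leg w' (K - t))" for t
  show False
  proof (rule no_closed_path[of K c])
    show "3 \<le> K"
      using i0 j0 meet \<open>w \<noteq> w'\<close> unfolding K_def by (cases "i0 = 1 \<and> j0 = 1") auto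
    show "inj_on c {0..<K}"
      unfolding c_def K_def by (rule inj_on_legs_loop[OF w w' i0 j0 meet first])
    show "E (c t) (c (Suc t))" if t: "Suc t < K" for t
    proof (cases "Suc t \<le> i0")
      case True
      thus ?thesis using leg_edge[OF w, of t] i0 unfolding c_def by auto
    next
      case False
      hence "c t = leg w' (Suc (K - Suc t))"
        using t meet unfolding c_def K_def by (cases "t = i0") (auto simp: Suc_diff_Suc)
      moreover have "c (Suc t) = leg w' (K - Suc t)" using False unfolding c_def by simp
      moreover have "K - Suc t < leg_length w'" using j0 False t unfolding K_def by auto
      ultimately show ?thesis using leg_edge[OF w', of "K - Suc t"] edge_sym by auto
    qed
    have "c (K - 1) = w'" using j0 meet unfolding c_def K_def by (cases "j0 = 1") auto
    moreover have "E m w'" using w' mem_neighbours_iff by auto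
    ultimately show "E (c (K - 1)) (c 0)" using edge_sym unfolding c_def by auto
  qed
qed

definition leg_vertices :: "nat set" where
  "leg_vertices = insert m {leg w j | w j. w \<in> N m \<and> 1 \<le> j \<and> j \<le> leg_length w}"

lemma leg_vertices_closed: assumes a: "a \<in> leg_vertices" and "E a b" shows "b \<in> leg_vertices"
proof -
  have b: "b \<in> N a" using \<open>E a b\<close> mem_neighbours_iff by auto
  have on_leg: "leg w j \<in> leg_vertices" if "w \<in> N m" "j \<le> leg_length w" for w j
    using that unfolding leg_vertices_def by (cases "j = 0") auto
  show ?thesis
  proof (cases "a = m")
    case True
    thus ?thesis using b on_leg[of b 1] leg_length_pos by auto
  next
    case False
    then obtain w j where wj: "w \<in> N m" "1 \<le> j" "j \<le> leg_length w" "a = leg w j"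
      using a unfolding leg_vertices_def by auto
    show ?thesis
    proof (cases "j = leg_length w")
      case True
      thus ?thesis using b neighbours_leg_end[OF wj(1)] wj on_leg[of w "j - 1"] by auto
    next
      case False
      thus ?thesis using b neighbours_leg_interior[OF wj(1) wj(2)] wj on_leg[of w "j - 1"] on_leg[of w "Suc j"]
        by auto
    qed
  qed
qed

lemma mem_leg_vertices: assumes "v < n" shows "v \<in> leg_vertices"
proof -
  from connected assms centre_lt obtain xs where xs: "walk E xs" "hd xs = m" "last xs = v"
    unfolding connected_graph_def by blast
  have on_walk: "xs ! k \<in> leg_vertices" if "k < length xs" for k
    using that
  proof (induction k)
    case 0 thus ?case using xs unfolding walk_def leg_vertices_def by (simp add: hd_conv_nth)
  next
    case (Suc k)
    hence "E (xs ! k) (xs ! Suc k)" using xs(1) unfolding walk_def by auto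
    thus ?case using Suc leg_vertices_closed by auto
  qed
  have "xs \<noteq> []" using xs unfolding walk_def by auto
  then show ?thesis using on_walk[of "length xs - 1"] xs(3) by (simp add: last_conv_nth)
qed

lemma pendant_vertices_eq_leg_ends: "pendant_vertices n E = (\<lambda>w. leg w (leg_length w)) ` N m"
proof (intro equalityI subsetI)
  fix v assume "v \<in> pendant_vertices n E"
  hence v: "v < n" "deg v = 1" unfolding pendant_vertices_def by auto
  have "v \<noteq> m" using v degree_centre_ge_3 by auto
  with mem_leg_vertices[OF v(1)] obtain w j where wj: "w \<in> N m" "1 \<le> j" "j \<le> leg_length w" "v = leg w j"
    unfolding leg_vertices_def by auto
  have "j = leg_length w" using degree_leg_less_leg_length[OF wj(1) wj(2)] wj v by force
  thus "v \<in> (\<lambda>w. leg w (leg_length w)) ` N m" using wj by auto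
next
  fix v assume "v \<in> (\<lambda>w. leg w (leg_length w)) ` N m"
  then obtain w where "w \<in> N m" "v = leg w (leg_length w)" by auto
  thus "v \<in> pendant_vertices n E" unfolding pendant_vertices_def
    using degree_leg_end leg_lt by auto
qed

lemma card_pendant_vertices: "card (pendant_vertices n E) = deg m"
proof -
  have "inj_on (\<lambda>w. leg w (leg_length w)) (N m)"
    using legs_disjoint leg_length_pos by (intro inj_onI) blast
  thus ?thesis unfolding pendant_vertices_eq_leg_ends degree_eq_card_neighbours by (rule card_image)
qed

end

section \<open>The kernel of \<open>L - I\<close> on a spider with three legs\<close>

lemma less_3_cases: "k < 3 \<Longrightarrow> k = 0 \<or> k = 1 \<or> k = (2::nat)"
  by auto

definition perm3 :: "nat \<Rightarrow> nat \<Rightarrow> nat \<Rightarrow> bool" where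
  "perm3 a b c \<longleftrightarrow> a < 3 \<and> b < 3 \<and> c < 3 \<and> a \<noteq> b \<and> b \<noteq> c \<and> a \<noteq> c"

definition mod3_labelling :: "nat \<Rightarrow> (nat \<Rightarrow> nat \<Rightarrow> bool) \<Rightarrow> nat \<Rightarrow> nat \<Rightarrow> nat \<Rightarrow> nat \<Rightarrow> bool" where
  "mod3_labelling n E m u1 u2 u3 \<longleftrightarrow> pendant_vertices n E = {u1, u2, u3} \<and> distinct [u1, u2, u3] \<and>
     ((graph_dist E u1 m mod 3 = 1 \<and> graph_dist E u2 m mod 3 = 1 \<and> graph_dist E u3 m mod 3 \<noteq> 1)
      \<or> (graph_dist E u1 m mod 3 = 2 \<and> graph_dist E u2 m mod 3 = 0 \<and> graph_dist E u3 m mod 3 = 0))"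

lemma perm3_sum: assumes "perm3 a b c" shows "f 0 + f 1 + f 2 = f a + f b + (f c :: 'a :: comm_monoid_add)"
proof -
  have abc: "a < 3" "b < 3" "c < 3" "a \<noteq> b" "b \<noteq> c" "a \<noteq> c" using assms unfolding perm3_def by auto
  from less_3_cases[OF abc(1)] less_3_cases[OF abc(2)] less_3_cases[OF abc(3)] show ?thesis
    using abc by (elim disjE) (auto simp: ac_simps)
qed

lemma perm3_cases: "perm3 a b c \<Longrightarrow> k < 3 \<Longrightarrow> k = a \<or> k = b \<or> k = c"
  using less_3_cases[of a] less_3_cases[of b] less_3_cases[of c] less_3_cases[of k]
  unfolding perm3_def by auto

text \<open>The solution of \<open>s (j + 2) = s (j + 1) - s j\<close>, \<open>s 0 = 1\<close>, \<open>s 1 = 0\<close>; it has period 6.\<close>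

definition leg_profile :: "nat \<Rightarrow> complex" where
  "leg_profile j = (if j mod 6 = 0 then 1 else if j mod 6 = 1 then 0 else if j mod 6 = 2 then -1
           else if j mod 6 = 3 then -1 else if j mod 6 = 4 then 0 else 1)"

lemma leg_profile_Suc_Suc: "leg_profile (Suc (Suc j)) = leg_profile (Suc j) - leg_profile j"
proof -
  have "j mod 6 < 6" by simp
  then have "j mod 6 = 0 \<or> j mod 6 = 1 \<or> j mod 6 = 2 \<or> j mod 6 = 3 \<or> j mod 6 = 4 \<or> j mod 6 = 5"
    by linarith
  then show ?thesis unfolding leg_profile_def by (elim disjE) (simp_all add: mod_Suc)
qed

lemma leg_profile_cases:
  assumes "1 \<le> l"
  shows "(l mod 3 = 1 \<and> leg_profile l = 0 \<and> leg_profile (l - 1) * leg_profile (l - 1) = 1)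
       \<or> (l mod 3 = 0 \<and> leg_profile l = leg_profile (l - 1) \<and> leg_profile l * leg_profile l = 1)
       \<or> (l mod 3 = 2 \<and> leg_profile (l - 1) = 0 \<and> leg_profile l * leg_profile l = 1)"
proof -
  obtain l' where l: "l = Suc l'" using assms by (cases l) auto
  define r where "r = Suc l' mod 6"
  have mod_3: "Suc l' mod 3 = r mod 3" unfolding r_def by (simp add: mod_mod_cancel)
  have pred_mod_6: "l' mod 6 = (if r = 0 then 5 else r - 1)" unfolding r_def by (auto simp: mod_Suc)
  have "r = 0 \<or> r = 1 \<or> r = 2 \<or> r = 3 \<or> r = 4 \<or> r = 5" unfolding r_def by auto
  then show ?thesis
    unfolding leg_profile_def l diff_Suc_1 mod_3 pred_mod_6 r_def[symmetric] by (elim disjE) simp_all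
qed

locale spider3 = sgraph +
  fixes m :: nat and leg :: "nat \<Rightarrow> nat \<Rightarrow> nat" and len :: "nat \<Rightarrow> nat"
  assumes centre_lt: "m < n"
    and len_pos: "\<And>k. k < 3 \<Longrightarrow> 1 \<le> len k"
    and leg_0: "\<And>k. k < 3 \<Longrightarrow> leg k 0 = m"
    and leg_lt: "\<And>k j. k < 3 \<Longrightarrow> j \<le> len k \<Longrightarrow> leg k j < n"
    and leg_inj: "\<And>k k' j j'. k < 3 \<Longrightarrow> k' < 3 \<Longrightarrow> 1 \<le> j \<Longrightarrow> j \<le> len k \<Longrightarrow> 1 \<le> j' \<Longrightarrow>
                   j' \<le> len k' \<Longrightarrow> leg k j = leg k' j' \<Longrightarrow> k = k' \<and> j = j'"
    and leg_ne_centre: "\<And>k j. k < 3 \<Longrightarrow> 1 \<le> j \<Longrightarrow> j \<le> len k \<Longrightarrow> leg k j \<noteq> m"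
    and legs_cover: "\<And>v. v < n \<Longrightarrow> v \<noteq> m \<Longrightarrow> \<exists>k<3. \<exists>j. 1 \<le> j \<and> j \<le> len k \<and> v = leg k j"
    and neighbours_centre: "neighbours n E m = {leg 0 1, leg 1 1, leg 2 1}"
    and neighbours_interior: "\<And>k j. k < 3 \<Longrightarrow> 1 \<le> j \<Longrightarrow> j < len k \<Longrightarrow>
                               neighbours n E (leg k j) = {leg k (j - 1), leg k (Suc j)}"
    and neighbours_end: "\<And>k. k < 3 \<Longrightarrow> neighbours n E (leg k (len k)) = {leg k (len k - 1)}"
    and pendant_vertices_eq: "pendant_vertices n E = {leg 0 (len 0), leg 1 (len 1), leg 2 (len 2)}"

lemma (in unique_major_tree) spider3_exists:
  assumes "card (pendant_vertices n E) = 3"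
  obtains leg3 len3 where "spider3 n E m leg3 len3"
proof -
  have "card (N m) = 3" using assms card_pendant_vertices degree_eq_card_neighbours by simp
  then obtain w0 w1 w2 where W: "N m = {w0, w1, w2}" "w0 \<noteq> w1" "w1 \<noteq> w2" "w0 \<noteq> w2"
    using card_3_iff[of "N m"] by blast
  define W where "W k = (if k = 0 then w0 else if k = 1 then w1 else w2)" for k :: nat
  have W_mem: "W k \<in> N m" for k unfolding W_def W by auto
  have W_inj: "k < 3 \<Longrightarrow> k' < 3 \<Longrightarrow> W k = W k' \<Longrightarrow> k = k'" for k k'
    using less_3_cases[of k] less_3_cases[of k'] W(2-4) unfolding W_def by auto
  have W_onto: "\<exists>k<3. w = W k" if "w \<in> N m" for w
  proof -
    have "w = W 0 \<or> w = W 1 \<or> w = W 2" using that W(1) unfolding W_def by auto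
    then show ?thesis by (metis zero_less_numeral one_less_numeral_iff semiring_norm(77) lessI numeral_2_eq_2 numeral_3_eq_3)
  qed
  have "spider3 n E m (\<lambda>k. leg (W k)) (\<lambda>k. leg_length (W k))"
  proof unfold_locales
    show "m < n" by (rule centre_lt)
    show "1 \<le> leg_length (W k)" for k using leg_length_pos[OF W_mem] .
    show "leg (W k) j < n" if "j \<le> leg_length (W k)" for k j using leg_lt[OF W_mem that] .
    show "k = k' \<and> j = j'"
      if "k < 3" "k' < 3" "1 \<le> j" "j \<le> leg_length (W k)" "1 \<le> j'" "j' \<le> leg_length (W k')"
        "leg (W k) j = leg (W k') j'" for k k' j j'
    proof (cases "W k = W k'")
      case True
      then show ?thesis using W_inj that leg_inj[OF W_mem, of j k j'] by auto
    next
      case False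
      then show ?thesis using legs_disjoint[OF W_mem W_mem False, of j j'] that by auto
    qed
    show "leg (W k) j \<noteq> m" if "1 \<le> j" "j \<le> leg_length (W k)" for k j
      using leg_ne_centre[OF W_mem that] .
    show "\<exists>k<3. \<exists>j. 1 \<le> j \<and> j \<le> leg_length (W k) \<and> v = leg (W k) j" if "v < n" "v \<noteq> m" for v
    proof -
      from mem_leg_vertices[OF that(1)] that(2) obtain w j
        where wj: "w \<in> N m" "1 \<le> j" "j \<le> leg_length w" "v = leg w j"
        unfolding leg_vertices_def by auto
      with W_onto[OF wj(1)] show ?thesis by auto
    qed
    show "N m = {leg (W 0) 1, leg (W 1) 1, leg (W 2) 1}" unfolding W_def using W by simp
    show "N (leg (W k) j) = {leg (W k) (j - 1), leg (W k) (Suc j)}" if "1 \<le> j" "j < leg_length (W k)" for k j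
      using neighbours_leg_interior[OF W_mem that] .
    show "N (leg (W k) (leg_length (W k))) = {leg (W k) (leg_length (W k) - 1)}" for k
      using neighbours_leg_end[OF W_mem] .
    show "pendant_vertices n E =
      {leg (W 0) (leg_length (W 0)), leg (W 1) (leg_length (W 1)), leg (W 2) (leg_length (W 2))}"
      unfolding pendant_vertices_eq_leg_ends W W_def by simp
  qed simp
  then show ?thesis by (rule that)
qed

context spider3
begin

definition leg_end :: "nat \<Rightarrow> nat" where
  "leg_end k = leg k (len k)"

lemma leg_end_lt: "k < 3 \<Longrightarrow> leg_end k < n"
  unfolding leg_end_def using leg_lt by auto

lemma leg_end_inj: assumes "a < 3" "b < 3" "leg_end a = leg_end b" shows "a = b"
  using leg_inj[OF assms(1,2) len_pos[OF assms(1)] le_refl len_pos[OF assms(2)] le_refl] assms(3)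
  unfolding leg_end_def by simp

lemma edge_leg_pred: assumes "k < 3" "1 \<le> j" "j \<le> len k" shows "E (leg k j) (leg k (j - 1))"
proof (cases "j = len k")
  case True thus ?thesis using neighbours_end[OF assms(1)] mem_neighbours_iff by auto
next
  case False thus ?thesis using neighbours_interior[OF assms(1,2)] assms mem_neighbours_iff by auto
qed

text \<open>A walk can only leave the end of a leg along that leg.\<close>

lemma walk_from_leg_end:
  assumes k: "k < 3" and zs: "walk E zs" "hd zs = leg_end k" and t: "t < length zs" "t < len k"
  shows "\<exists>j. len k \<le> j + t \<and> 1 \<le> j \<and> j \<le> len k \<and> zs ! t = leg k j"
  using t
proof (induction t)
  case 0
  then show ?case using zs(2) len_pos[OF k] unfolding leg_end_def by (auto simp: hd_conv_nth)
next
  case (Suc t)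
  then obtain j where j: "len k \<le> j + t" "1 \<le> j" "j \<le> len k" "zs ! t = leg k j" by auto
  have "zs ! Suc t \<in> neighbours n E (leg k j)"
    using zs(1) Suc.prems j(4) mem_neighbours_iff unfolding walk_def by metis
  moreover have "j < len k \<Longrightarrow> neighbours n E (leg k j) = {leg k (j - 1), leg k (Suc j)}"
    using neighbours_interior[OF k j(2)] .
  ultimately have "zs ! Suc t = leg k (j - 1) \<or> (j < len k \<and> zs ! Suc t = leg k (Suc j))"
    using neighbours_end[OF k] j(3) by (cases "j = len k") auto
  then show ?case
  proof
    assume "zs ! Suc t = leg k (j - 1)"
    then show ?case using Suc.prems j by (intro exI[of _ "j - 1"]) auto
  next
    assume "j < len k \<and> zs ! Suc t = leg k (Suc j)"
    then show ?case using j by (intro exI[of _ "Suc j"]) auto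
  qed
qed

lemma graph_dist_leg_end: assumes k: "k < 3" shows "graph_dist E (leg_end k) m = len k"
proof -
  let ?Q = "\<lambda>d. \<exists>xs. walk E xs \<and> hd xs = leg_end k \<and> last xs = m \<and> length xs = Suc d"
  have "?Q (len k)"
  proof (intro exI conjI)
    let ?xs = "map (\<lambda>t. leg k (len k - t)) [0..<Suc (len k)]"
    have "E (leg k (len k - t)) (leg k (len k - Suc t))" if "t < len k" for t
    proof -
      have "E (leg k (len k - t)) (leg k (len k - t - 1))" using edge_leg_pred[OF k, of "len k - t"] that by simp
      moreover have "len k - t - 1 = len k - Suc t" by simp
      ultimately show ?thesis by simp
    qed
    then show "walk E ?xs" unfolding walk_def by (simp del: upt_Suc)
    show "hd ?xs = leg_end k" unfolding leg_end_def by (simp del: upt_Suc add: hd_map)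
    show "last ?xs = m" using leg_0[OF k] by (simp del: upt_Suc add: last_map)
  qed simp
  moreover have "len k \<le> d" if "?Q d" for d
  proof (rule ccontr)
    assume "\<not> len k \<le> d"
    from that obtain zs where zs: "walk E zs" "hd zs = leg_end k" "last zs = m" "length zs = Suc d"
      by auto
    then have "zs \<noteq> []" by auto
    then have "zs ! d = m" using zs(3,4) by (simp add: last_conv_nth)
    moreover obtain j where "1 \<le> j" "j \<le> len k" "zs ! d = leg k j"
      using walk_from_leg_end[OF k zs(1,2), of d] zs(4) \<open>\<not> len k \<le> d\<close> by auto
    ultimately show False using leg_ne_centre[OF k] by metis
  qed
  ultimately show ?thesis unfolding graph_dist_def by (rule Least_equality)
qed

lemma distinct_centre_neighbours: "distinct [leg 0 1, leg 1 1, leg 2 1]"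
  using leg_inj[of 0 1 1 1] leg_inj[of 1 2 1 1] leg_inj[of 0 2 1 1] len_pos[of 0] len_pos[of 1] len_pos[of 2]
  by auto

lemma degree_centre: "degree n E m = 3"
  using distinct_centre_neighbours unfolding degree_eq_card_neighbours neighbours_centre by simp

lemma leg_pred_ne_leg_Suc: assumes "k < 3" "1 \<le> j" "j < len k" shows "leg k (j - 1) \<noteq> leg k (Suc j)"
proof (cases "j = 1")
  case True thus ?thesis using leg_0 leg_ne_centre[of k "Suc j"] assms by auto
next
  case False
  hence "1 \<le> j - 1" "j - 1 \<le> len k" "1 \<le> Suc j" "Suc j \<le> len k" using assms by auto
  from leg_inj[OF assms(1) assms(1) this] show ?thesis by auto
qed

lemma degree_leg_interior: "k < 3 \<Longrightarrow> 1 \<le> j \<Longrightarrow> j < len k \<Longrightarrow> degree n E (leg k j) = 2"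
  using leg_pred_ne_leg_Suc unfolding degree_eq_card_neighbours by (simp add: neighbours_interior)

lemma degree_leg_end: "k < 3 \<Longrightarrow> degree n E (leg k (len k)) = 1"
  unfolding degree_eq_card_neighbours using neighbours_end by simp

definition laplacian_minus_id :: "complex mat" where
  "laplacian_minus_id = char_matrix (map_mat complex_of_real (laplacian n E)) 1"

lemma laplacian_minus_id_carrier: "laplacian_minus_id \<in> carrier_mat n n"
  unfolding laplacian_minus_id_def laplacian_def by simp

lemma laplacian_minus_id_mult_vec_nth:
  assumes i: "i < n" and x: "x \<in> carrier_vec n"
  shows "(laplacian_minus_id *\<^sub>v x) $ i = (of_nat (degree n E i) - 1) * x $ i - (\<Sum>j\<in>neighbours n E i. x $ j)"
proof -
  have "(laplacian_minus_id *\<^sub>v x) $ i = (\<Sum>j<n. laplacian_minus_id $$ (i, j) * x $ j)"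
    using laplacian_minus_id_carrier i x by (auto simp: scalar_prod_def row_def lessThan_atLeast0)
  also have "\<dots> = (\<Sum>j<n. (if i = j then (of_nat (degree n E i) - 1) * x $ j else 0)
                        - (if E i j then x $ j else 0))"
    by (rule sum.cong[OF refl])
      (use i in \<open>auto simp: laplacian_minus_id_def laplacian_def char_matrix_def algebra_simps\<close>)
  also have "\<dots> = (of_nat (degree n E i) - 1) * x $ i - (\<Sum>j<n. if E i j then x $ j else 0)"
    using i by (simp add: sum_subtractf)
  also have "(\<Sum>j<n. if E i j then x $ j else 0) = (\<Sum>j\<in>neighbours n E i. x $ j)"
    unfolding neighbours_def by (simp add: sum.If_cases lessThan_def Collect_conj_eq Int_commute)
  finally show ?thesis .
qed

lemma laplacian_minus_id_mult_vec_centre: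
  "x \<in> carrier_vec n \<Longrightarrow>
    (laplacian_minus_id *\<^sub>v x) $ m = 2 * x $ m - (x $ leg 0 1 + x $ leg 1 1 + x $ leg 2 1)"
  using laplacian_minus_id_mult_vec_nth[OF centre_lt] degree_centre distinct_centre_neighbours
  unfolding neighbours_centre by (simp add: add.assoc)

lemma laplacian_minus_id_mult_vec_interior:
  assumes "x \<in> carrier_vec n" "k < 3" "1 \<le> j" "j < len k"
  shows "(laplacian_minus_id *\<^sub>v x) $ leg k j = x $ leg k j - (x $ leg k (j - 1) + x $ leg k (Suc j))"
  using laplacian_minus_id_mult_vec_nth[OF leg_lt[OF assms(2) less_imp_le[OF assms(4)]] assms(1)]
    degree_leg_interior[OF assms(2-4)] leg_pred_ne_leg_Suc[OF assms(2-4)]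
  unfolding neighbours_interior[OF assms(2-4)] by simp

lemma laplacian_minus_id_mult_vec_end:
  "x \<in> carrier_vec n \<Longrightarrow> k < 3 \<Longrightarrow> (laplacian_minus_id *\<^sub>v x) $ leg k (len k) = - x $ leg k (len k - 1)"
  using laplacian_minus_id_mult_vec_nth[OF leg_lt[OF _ le_refl]] degree_leg_end neighbours_end by simp

lemma laplacian_minus_id_mult_vec_eq_0_iff:
  assumes x: "x \<in> carrier_vec n"
  shows "laplacian_minus_id *\<^sub>v x = 0\<^sub>v n \<longleftrightarrow>
    2 * x $ m = x $ leg 0 1 + x $ leg 1 1 + x $ leg 2 1 \<and>
    (\<forall>k<3. \<forall>j. 1 \<le> j \<and> j < len k \<longrightarrow> x $ leg k j = x $ leg k (j - 1) + x $ leg k (Suc j)) \<and>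
    (\<forall>k<3. x $ leg k (len k - 1) = 0)"
    (is "_ \<longleftrightarrow> ?centre \<and> ?interior \<and> ?end")
proof -
  note at_centre = laplacian_minus_id_mult_vec_centre[OF x]
    and at_interior = laplacian_minus_id_mult_vec_interior[OF x]
    and at_end = laplacian_minus_id_mult_vec_end[OF x]
  show ?thesis
  proof
    assume "laplacian_minus_id *\<^sub>v x = 0\<^sub>v n"
    then have zero: "(laplacian_minus_id *\<^sub>v x) $ i = 0" if "i < n" for i using that by simp
    show "?centre \<and> ?interior \<and> ?end"
    proof (intro conjI allI impI)
      show ?centre using zero[OF centre_lt] at_centre by simp
      fix k :: nat assume k: "k < 3"
      show "x $ leg k (len k - 1) = 0" using zero[OF leg_lt[OF k le_refl]] at_end[OF k] by simp
      fix j :: nat assume j: "1 \<le> j \<and> j < len k"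
      show "x $ leg k j = x $ leg k (j - 1) + x $ leg k (Suc j)"
        using zero[OF leg_lt[OF k, of j]] at_interior[OF k] j by simp
    qed
  next
    assume eqs: "?centre \<and> ?interior \<and> ?end"
    show "laplacian_minus_id *\<^sub>v x = 0\<^sub>v n"
    proof (rule eq_vecI)
      fix i assume "i < dim_vec (0\<^sub>v n)"
      hence i: "i < n" by simp
      show "(laplacian_minus_id *\<^sub>v x) $ i = 0\<^sub>v n $ i"
      proof (cases "i = m")
        case True thus ?thesis using at_centre eqs i by simp
      next
        case False
        then obtain k j where kj: "k < 3" "1 \<le> j" "j \<le> len k" "i = leg k j"
          using legs_cover[OF i] by auto
        show ?thesis
        proof (cases "j = len k")
          case True thus ?thesis using at_end[OF kj(1)] eqs kj i by simp
        next
          case False thus ?thesis using at_interior[OF kj(1,2)] eqs kj i by simp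
        qed
      qed
    qed (use laplacian_minus_id_carrier in simp)
  qed
qed

lemma kernel_vec_on_leg:
  assumes x: "x \<in> carrier_vec n" "laplacian_minus_id *\<^sub>v x = 0\<^sub>v n" and k: "k < 3" and j: "j \<le> len k"
  shows "x $ leg k j = x $ leg_end k * leg_profile (len k - j)"
proof -
  note eqs = laplacian_minus_id_mult_vec_eq_0_iff[OF x(1), THEN iffD1, OF x(2)]
  let ?P = "\<lambda>i. x $ leg k (len k - i) = x $ leg_end k * leg_profile i"
  have "(i \<le> len k \<longrightarrow> ?P i) \<and> (Suc i \<le> len k \<longrightarrow> ?P (Suc i))" for i
  proof (induction i)
    case 0
    show ?case using eqs k unfolding leg_end_def by (simp add: leg_profile_def)
  next
    case (Suc i)
    have "?P (Suc (Suc i))" if le: "Suc (Suc i) \<le> len k"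
    proof -
      define p where "p = len k - Suc i"
      have p: "1 \<le> p" "p < len k" "p - 1 = len k - Suc (Suc i)" "Suc p = len k - i"
        using le unfolding p_def by auto
      have "x $ leg k p = x $ leg k (p - 1) + x $ leg k (Suc p)" using eqs k p by blast
      hence "x $ leg k (len k - Suc (Suc i)) = x $ leg k (len k - Suc i) - x $ leg k (len k - i)"
        using p unfolding p_def by (simp add: algebra_simps)
      also have "\<dots> = x $ leg_end k * (leg_profile (Suc i) - leg_profile i)"
        using Suc le by (simp add: algebra_simps)
      finally show ?thesis by (simp add: leg_profile_Suc_Suc)
    qed
    thus ?case using Suc by simp
  qed
  hence "?P (len k - j)" by simp
  thus ?thesis using j by simp
qed

definition centre_coeff :: "nat \<Rightarrow> complex" where
  "centre_coeff k = leg_profile (len k)"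

definition neighbour_coeff :: "nat \<Rightarrow> complex" where
  "neighbour_coeff k = leg_profile (len k - 1)"

text \<open>By \<open>kernel_vec_on_leg\<close>, a kernel vector is determined by its values \<open>t k\<close> at the three
  pendant vertices and \<open>c\<close> at the centre; these are constrained exactly by the equations at \<open>m\<close>.\<close>

definition junction_eqs :: "(nat \<Rightarrow> complex) \<Rightarrow> complex \<Rightarrow> bool" where
  "junction_eqs t c \<longleftrightarrow> (\<forall>k<3. c = t k * centre_coeff k) \<and>
     2 * c = t 0 * neighbour_coeff 0 + t 1 * neighbour_coeff 1 + t 2 * neighbour_coeff 2"

lemma junction_eqs_kernel_vec:
  assumes x: "x \<in> carrier_vec n" "laplacian_minus_id *\<^sub>v x = 0\<^sub>v n"
  shows "junction_eqs (\<lambda>k. x $ leg_end k) (x $ m)"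
proof -
  note eqs = laplacian_minus_id_mult_vec_eq_0_iff[OF x(1), THEN iffD1, OF x(2)]
  have "x $ m = x $ leg_end k * centre_coeff k" if "k < 3" for k
    using kernel_vec_on_leg[OF x that, of 0] leg_0[OF that] unfolding centre_coeff_def by simp
  moreover have "x $ leg k 1 = x $ leg_end k * neighbour_coeff k" if "k < 3" for k
    using kernel_vec_on_leg[OF x that, of 1] len_pos[OF that] unfolding neighbour_coeff_def by simp
  ultimately show ?thesis unfolding junction_eqs_def using eqs by auto
qed

definition leg_position :: "nat \<Rightarrow> nat \<times> nat" where
  "leg_position v = (SOME (k, j). k < 3 \<and> 1 \<le> j \<and> j \<le> len k \<and> v = leg k j)"

lemma leg_position_leg: assumes "k < 3" "1 \<le> j" "j \<le> len k" shows "leg_position (leg k j) = (k, j)"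
proof -
  let ?Q = "\<lambda>(k', j'). k' < 3 \<and> 1 \<le> j' \<and> j' \<le> len k' \<and> leg k j = leg k' j'"
  have "?Q (k, j)" using assms by simp
  hence "?Q (leg_position (leg k j))" unfolding leg_position_def by (rule someI)
  thus ?thesis using leg_inj[OF assms(1) _ assms(2,3)] by (auto split: prod.splits)
qed

lemma kernel_vec_junction_eqs:
  assumes "junction_eqs t c"
  obtains x where "x \<in> carrier_vec n" "laplacian_minus_id *\<^sub>v x = 0\<^sub>v n"
    "\<And>k. k < 3 \<Longrightarrow> x $ leg_end k = t k" "x $ m = c"
proof -
  define x where "x = vec n (\<lambda>v. if v = m then c
    else case leg_position v of (k, j) \<Rightarrow> t k * leg_profile (len k - j))"
  have x: "x \<in> carrier_vec n" unfolding x_def by simp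
  have x_centre: "x $ m = c" unfolding x_def using centre_lt by simp
  have x_leg: "x $ leg k j = t k * leg_profile (len k - j)" if "k < 3" "j \<le> len k" for k j
  proof (cases "j = 0")
    case True
    thus ?thesis using x_centre leg_0[OF that(1)] assms that
      unfolding junction_eqs_def centre_coeff_def by simp
  next
    case False
    thus ?thesis using leg_ne_centre[OF that(1)] leg_position_leg[OF that(1)] leg_lt[OF that] that
      unfolding x_def by simp
  qed
  have "laplacian_minus_id *\<^sub>v x = 0\<^sub>v n"
  proof (rule laplacian_minus_id_mult_vec_eq_0_iff[OF x, THEN iffD2], intro conjI allI impI)
    show "2 * x $ m = x $ leg 0 1 + x $ leg 1 1 + x $ leg 2 1"
      using assms x_centre x_leg[of 0 1] x_leg[of 1 1] x_leg[of 2 1] len_pos[of 0] len_pos[of 1] len_pos[of 2]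
      unfolding junction_eqs_def neighbour_coeff_def by simp
  next
    fix k j :: nat assume k: "k < 3" and j: "1 \<le> j \<and> j < len k"
    then obtain a where a: "len k - j = Suc a" "len k - (j - 1) = Suc (Suc a)" "len k - Suc j = a"
      by (intro that[of "len k - Suc j"]) auto
    show "x $ leg k j = x $ leg k (j - 1) + x $ leg k (Suc j)"
      using x_leg[OF k, of j] x_leg[OF k, of "j - 1"] x_leg[OF k, of "Suc j"] j a
      by (simp add: leg_profile_Suc_Suc algebra_simps)
  next
    fix k :: nat assume k: "k < 3"
    show "x $ leg k (len k - 1) = 0" using x_leg[OF k, of "len k - 1"] len_pos[OF k] by (simp add: leg_profile_def)
  qed
  moreover have "x $ leg_end k = t k" if "k < 3" for k
    using x_leg[OF that] unfolding leg_end_def by (simp add: leg_profile_def)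
  ultimately show ?thesis using that x x_centre by blast
qed

lemma kernel_vec_eq_smult:
  assumes x: "x \<in> carrier_vec n" "laplacian_minus_id *\<^sub>v x = 0\<^sub>v n"
    and x': "x' \<in> carrier_vec n" "laplacian_minus_id *\<^sub>v x' = 0\<^sub>v n"
    and centre: "x' $ m = a * x $ m" and ends: "\<And>k. k < 3 \<Longrightarrow> x' $ leg_end k = a * x $ leg_end k"
  shows "x' = a \<cdot>\<^sub>v x"
proof (rule eq_vecI)
  fix i assume "i < dim_vec (a \<cdot>\<^sub>v x)"
  hence i: "i < n" using x by simp
  show "x' $ i = (a \<cdot>\<^sub>v x) $ i"
  proof (cases "i = m")
    case True thus ?thesis using centre i x by simp
  next
    case False
    then obtain k j where kj: "k < 3" "j \<le> len k" "i = leg k j" using legs_cover[OF i] by auto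
    then show ?thesis
      using kernel_vec_on_leg[OF x kj(1,2)] kernel_vec_on_leg[OF x' kj(1,2)] ends[OF kj(1)] i x by simp
  qed
qed (use x x' in simp)

lemma kernel_dim_eq_0_if_junction_eqs_trivial:
  assumes "\<And>t c. junction_eqs t c \<Longrightarrow> c = 0 \<and> (\<forall>k<3. t k = 0)"
  shows "kernel_dim laplacian_minus_id = 0"
proof (rule kernel_dim_eq_0I[OF laplacian_minus_id_carrier])
  fix x assume x: "x \<in> carrier_vec n" "laplacian_minus_id *\<^sub>v x = 0\<^sub>v n"
  with assms[OF junction_eqs_kernel_vec[OF x]] have "x = 0 \<cdot>\<^sub>v x"
    by (intro kernel_vec_eq_smult[OF x x]) auto
  also have "0 \<cdot>\<^sub>v x = 0\<^sub>v n" using x by (intro eq_vecI) auto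
  finally show "x = 0\<^sub>v n" .
qed

lemma kernel_dim_eq_1_if_junction_eqs_line:
  assumes solution: "junction_eqs t0 c0" and k0: "k0 < 3" "t0 k0 \<noteq> 0"
    and multiple: "\<And>t c. junction_eqs t c \<Longrightarrow> \<exists>a. c = a * c0 \<and> (\<forall>k<3. t k = a * t0 k)"
  shows "kernel_dim laplacian_minus_id = 1"
proof -
  obtain v where v: "v \<in> carrier_vec n" "laplacian_minus_id *\<^sub>v v = 0\<^sub>v n"
    "\<And>k. k < 3 \<Longrightarrow> v $ leg_end k = t0 k" "v $ m = c0"
    using kernel_vec_junction_eqs[OF solution] by blast
  show ?thesis
  proof (rule kernel_dim_eq_1I[OF laplacian_minus_id_carrier v(1,2) leg_end_lt[OF k0(1)]])
    show "v $ leg_end k0 \<noteq> 0" using v k0 by auto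
    fix w assume w: "w \<in> carrier_vec n" "laplacian_minus_id *\<^sub>v w = 0\<^sub>v n"
    from multiple[OF junction_eqs_kernel_vec[OF w]] obtain a
      where "w $ m = a * c0" "\<forall>k<3. w $ leg_end k = a * t0 k" by auto
    then have "w = a \<cdot>\<^sub>v v" by (intro kernel_vec_eq_smult[OF v(1,2) w]) (use v in auto)
    thus "\<exists>a. w = a \<cdot>\<^sub>v v" by blast
  qed
qed

lemma kernel_dim_ge_2_if_junction_eqs_independent:
  assumes "junction_eqs t c" "junction_eqs t' c'" and ab: "a < 3" "b < 3"
    and "t a \<noteq> 0" "t b = 0" "t' a = 0" "t' b \<noteq> 0"
  shows "2 \<le> kernel_dim laplacian_minus_id"
proof -
  obtain v where v: "v \<in> carrier_vec n" "laplacian_minus_id *\<^sub>v v = 0\<^sub>v n" "\<And>k. k < 3 \<Longrightarrow> v $ leg_end k = t k"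
    using kernel_vec_junction_eqs[OF assms(1)] by blast
  obtain w where w: "w \<in> carrier_vec n" "laplacian_minus_id *\<^sub>v w = 0\<^sub>v n" "\<And>k. k < 3 \<Longrightarrow> w $ leg_end k = t' k"
    using kernel_vec_junction_eqs[OF assms(2)] by blast
  show ?thesis
    by (rule kernel_dim_ge_2I[OF laplacian_minus_id_carrier v(1,2) w(1,2) leg_end_lt[OF ab(1)] leg_end_lt[OF ab(2)]])
      (use v w assms in auto)
qed

section \<open>Leg lengths modulo 3\<close>

definition residue :: "nat \<Rightarrow> nat" where
  "residue k = len k mod 3"

lemma coeffs_cases:
  assumes "k < 3"
  shows "(residue k = 1 \<and> centre_coeff k = 0 \<and> neighbour_coeff k * neighbour_coeff k = 1)
       \<or> (residue k = 0 \<and> centre_coeff k = neighbour_coeff k \<and> centre_coeff k * centre_coeff k = 1)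
       \<or> (residue k = 2 \<and> neighbour_coeff k = 0 \<and> centre_coeff k * centre_coeff k = 1)"
  using leg_profile_cases[OF len_pos[OF assms]]
  unfolding residue_def centre_coeff_def neighbour_coeff_def .

lemma coeffs_residue_1: "k < 3 \<Longrightarrow> residue k = 1 \<Longrightarrow> centre_coeff k = 0 \<and> neighbour_coeff k * neighbour_coeff k = 1"
  and coeffs_residue_0: "k < 3 \<Longrightarrow> residue k = 0 \<Longrightarrow> centre_coeff k = neighbour_coeff k \<and> centre_coeff k * centre_coeff k = 1"
  and coeffs_residue_2: "k < 3 \<Longrightarrow> residue k = 2 \<Longrightarrow> neighbour_coeff k = 0 \<and> centre_coeff k * centre_coeff k = 1"
  and centre_coeff_residue_ne_1: "k < 3 \<Longrightarrow> residue k \<noteq> 1 \<Longrightarrow> centre_coeff k * centre_coeff k = 1"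
  using coeffs_cases by force+

lemma junction_eqs_end_value:
  assumes "junction_eqs t c" "k < 3" "centre_coeff k * centre_coeff k = 1"
  shows "t k = c * centre_coeff k"
proof -
  have "c * centre_coeff k = t k * (centre_coeff k * centre_coeff k)"
    using assms(1,2) unfolding junction_eqs_def by (simp add: algebra_simps)
  thus ?thesis using assms(3) by simp
qed

lemma kernel_dim_eq_1_if_two_residues_1:
  assumes p: "perm3 a b c" and "residue a = 1" "residue b = 1" "residue c \<noteq> 1"
  shows "kernel_dim laplacian_minus_id = 1"
proof -
  have abc: "a < 3" "b < 3" "c < 3" "a \<noteq> b" "b \<noteq> c" "a \<noteq> c" using p unfolding perm3_def by auto
  note A = coeffs_residue_1[OF abc(1) assms(2)] and B = coeffs_residue_1[OF abc(2) assms(3)]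
    and C = centre_coeff_residue_ne_1[OF abc(3) assms(4)]
  define t0 where "t0 k = (if k = a then neighbour_coeff b else if k = b then - neighbour_coeff a else 0)" for k
  show ?thesis
  proof (rule kernel_dim_eq_1_if_junction_eqs_line[of t0 0 a])
    show "junction_eqs t0 0" unfolding junction_eqs_def
    proof (intro conjI allI impI)
      fix k :: nat assume "k < 3"
      thus "0 = t0 k * centre_coeff k" using perm3_cases[OF p] A B unfolding t0_def by auto
    next
      show "2 * 0 = t0 0 * neighbour_coeff 0 + t0 1 * neighbour_coeff 1 + t0 2 * neighbour_coeff 2"
        unfolding perm3_sum[OF p, of "\<lambda>k. t0 k * neighbour_coeff k"] using abc unfolding t0_def by simp
    qed
    show "t0 a \<noteq> 0" unfolding t0_def using B by auto
    fix t c' assume eqs: "junction_eqs t c'"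
    have c': "c' = 0" using eqs A abc unfolding junction_eqs_def by auto
    have tc: "t c = 0" using junction_eqs_end_value[OF eqs abc(3) C] c' by simp
    have "t a * neighbour_coeff a + t b * neighbour_coeff b = 0"
      using eqs c' tc unfolding junction_eqs_def perm3_sum[OF p, of "\<lambda>k. t k * neighbour_coeff k"] by simp
    hence "t a * neighbour_coeff a * neighbour_coeff b + t b * (neighbour_coeff b * neighbour_coeff b) = 0"
      by (metis mult_zero_left distrib_right mult.assoc)
    hence tb: "t b = - (t a * neighbour_coeff b) * neighbour_coeff a" using B by (simp add: algebra_simps add_eq_0_iff)
    have ta: "t a = t a * neighbour_coeff b * neighbour_coeff b" using B by (simp add: mult.assoc)
    show "\<exists>s. c' = s * 0 \<and> (\<forall>k<3. t k = s * t0 k)"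
    proof (intro exI[of _ "t a * neighbour_coeff b"] conjI allI impI)
      fix k :: nat assume "k < 3"
      thus "t k = t a * neighbour_coeff b * t0 k" using perm3_cases[OF p] abc ta tb tc unfolding t0_def
        by (auto simp: algebra_simps)
    qed (use c' in simp)
  qed (use abc in simp)
qed

lemma kernel_dim_eq_1_if_residues_2_0_0:
  assumes p: "perm3 a b c" and "residue a = 2" "residue b = 0" "residue c = 0"
  shows "kernel_dim laplacian_minus_id = 1"
proof -
  have abc: "a < 3" "b < 3" "c < 3" using p unfolding perm3_def by auto
  note A = coeffs_residue_2[OF abc(1) assms(2)] and B = coeffs_residue_0[OF abc(2) assms(3)]
    and C = coeffs_residue_0[OF abc(3) assms(4)]
  have square: "centre_coeff k * centre_coeff k = 1" if "k < 3" for k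
    using centre_coeff_residue_ne_1[OF that] perm3_cases[OF p that] assms by auto
  show ?thesis
  proof (rule kernel_dim_eq_1_if_junction_eqs_line[of centre_coeff 1 a])
    have "centre_coeff b * neighbour_coeff b = 1" "centre_coeff c * neighbour_coeff c = 1" using B C by auto
    then show "junction_eqs centre_coeff 1" unfolding junction_eqs_def
      using square A unfolding perm3_sum[OF p, of "\<lambda>k. centre_coeff k * neighbour_coeff k"] by simp
    show "centre_coeff a \<noteq> 0" using A by auto
    fix t c' assume "junction_eqs t c'"
    then show "\<exists>s. c' = s * 1 \<and> (\<forall>k<3. t k = s * centre_coeff k)"
      using junction_eqs_end_value square by auto
  qed (use abc in simp)
qed

lemma kernel_dim_ge_2_if_all_residues_1:
  assumes "residue 0 = 1" "residue 1 = 1" "residue 2 = 1"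
  shows "2 \<le> kernel_dim laplacian_minus_id"
proof -
  note coeffs = coeffs_residue_1[of 0] coeffs_residue_1[of 1] coeffs_residue_1[of 2]
  define t where "t k = (if k = 0 then neighbour_coeff 1 else if k = 1 then - neighbour_coeff 0 else 0)" for k :: nat
  define t' where "t' k = (if k = 1 then neighbour_coeff 2 else if k = 2 then - neighbour_coeff 1 else 0)" for k :: nat
  show ?thesis
  proof (rule kernel_dim_ge_2_if_junction_eqs_independent[of t 0 t' 0 0 2])
    show "junction_eqs t 0" "junction_eqs t' 0"
      unfolding junction_eqs_def t_def t'_def using coeffs assms by (auto dest: less_3_cases)
  qed (use coeffs assms in \<open>auto simp: t_def t'_def\<close>)
qed

lemma kernel_dim_eq_0_if_one_residue_1:
  assumes p: "perm3 a b c" and "residue a = 1" "residue b \<noteq> 1" "residue c \<noteq> 1"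
  shows "kernel_dim laplacian_minus_id = 0"
proof (rule kernel_dim_eq_0_if_junction_eqs_trivial)
  have abc: "a < 3" "b < 3" "c < 3" using p unfolding perm3_def by auto
  note A = coeffs_residue_1[OF abc(1) assms(2)] and B = centre_coeff_residue_ne_1[OF abc(2) assms(3)]
    and C = centre_coeff_residue_ne_1[OF abc(3) assms(4)]
  fix t c' assume eqs: "junction_eqs t c'"
  have c': "c' = 0" using eqs A abc unfolding junction_eqs_def by auto
  have tb: "t b = 0" using junction_eqs_end_value[OF eqs abc(2) B] c' by simp
  have tc: "t c = 0" using junction_eqs_end_value[OF eqs abc(3) C] c' by simp
  have "t a * neighbour_coeff a = 0"
    using eqs c' tb tc unfolding junction_eqs_def perm3_sum[OF p, of "\<lambda>k. t k * neighbour_coeff k"] by simp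
  hence "t a = 0" using A by auto
  then show "c' = 0 \<and> (\<forall>k<3. t k = 0)" using c' tb tc perm3_cases[OF p] by auto
qed

text \<open>With no residue \<open>1\<close>, \<open>t k = c * centre_coeff k\<close> turns the equation at the centre into
  \<open>2 c = c * card {k. residue k = 0}\<close>.\<close>

lemma kernel_dim_eq_0_if_no_residue_1:
  assumes "residue 0 \<noteq> 1" "residue 1 \<noteq> 1" "residue 2 \<noteq> 1"
    and not_2_0_0: "\<not> ((residue 0 = 0 \<and> residue 1 = 0 \<and> residue 2 = 2) \<or> (residue 0 = 0 \<and> residue 1 = 2 \<and> residue 2 = 0)
                       \<or> (residue 0 = 2 \<and> residue 1 = 0 \<and> residue 2 = 0))"
  shows "kernel_dim laplacian_minus_id = 0"
proof (rule kernel_dim_eq_0_if_junction_eqs_trivial)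
  have no_1: "residue k \<noteq> 1" if "k < 3" for k using assms(1-3) less_3_cases[OF that] by auto
  fix t c assume eqs: "junction_eqs t c"
  have t: "t k = c * centre_coeff k" if "k < 3" for k
    using junction_eqs_end_value[OF eqs that centre_coeff_residue_ne_1[OF that no_1[OF that]]] .
  have products: "centre_coeff k * neighbour_coeff k = (if residue k = 0 then 1 else 0)" if "k < 3" for k
    using coeffs_cases[OF that] no_1[OF that] by auto
  have "2 * c = c * (centre_coeff 0 * neighbour_coeff 0 + centre_coeff 1 * neighbour_coeff 1
                     + centre_coeff 2 * neighbour_coeff 2)"
    using eqs t[of 0] t[of 1] t[of 2] unfolding junction_eqs_def by (simp add: algebra_simps)
  hence "2 * c = c * ((if residue 0 = 0 then 1 else 0) + (if residue 1 = 0 then 1 else 0)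
                     + (if residue 2 = 0 then 1 else 0))"
    using products[of 0] products[of 1] products[of 2] by simp
  moreover have "residue k = 0 \<or> residue k = 2" if "k < 3" for k
    using no_1[OF that] unfolding residue_def by auto
  note this[of 0] this[of 1] this[of 2]
  ultimately have "c = 0" using not_2_0_0 by (auto split: if_splits)
  then show "c = 0 \<and> (\<forall>k<3. t k = 0)" using t by auto
qed

definition residue_condition :: bool where
  "residue_condition \<longleftrightarrow> (\<exists>a b c. perm3 a b c \<and>
     ((residue a = 1 \<and> residue b = 1 \<and> residue c \<noteq> 1) \<or> (residue a = 2 \<and> residue b = 0 \<and> residue c = 0)))"

lemma kernel_dim_eq_1_iff: "kernel_dim laplacian_minus_id = 1 \<longleftrightarrow> residue_condition"
proof
  assume residue_condition
  then show "kernel_dim laplacian_minus_id = 1"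
    unfolding residue_condition_def
    using kernel_dim_eq_1_if_two_residues_1 kernel_dim_eq_1_if_residues_2_0_0 by blast
next
  assume dim: "kernel_dim laplacian_minus_id = 1"
  show residue_condition
  proof (rule ccontr)
    assume "\<not> residue_condition"
    then have not_A: "perm3 a b c \<Longrightarrow> residue a = 1 \<Longrightarrow> residue b = 1 \<Longrightarrow> residue c \<noteq> 1 \<Longrightarrow> False"
      and not_B: "perm3 a b c \<Longrightarrow> residue a = 2 \<Longrightarrow> residue b = 0 \<Longrightarrow> residue c = 0 \<Longrightarrow> False" for a b c
      unfolding residue_condition_def by blast+
    have p: "perm3 0 1 2" "perm3 0 2 1" "perm3 1 2 0" "perm3 1 0 2" "perm3 2 0 1"
      unfolding perm3_def by auto
    have residue_lt: "residue k < 3" for k unfolding residue_def by simp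
    note facts = kernel_dim_ge_2_if_all_residues_1
      kernel_dim_eq_0_if_one_residue_1[OF p(1)] kernel_dim_eq_0_if_one_residue_1[OF p(4)]
      kernel_dim_eq_0_if_one_residue_1[OF p(5)] kernel_dim_eq_0_if_no_residue_1
      not_A[OF p(1)] not_A[OF p(2)] not_A[OF p(3)] not_B[OF p(1)] not_B[OF p(4)] not_B[OF p(5)]
    from less_3_cases[OF residue_lt[of 0]] less_3_cases[OF residue_lt[of 1]] less_3_cases[OF residue_lt[of 2]]
    show False
      using dim facts by (elim disjE) simp_all
  qed
qed

lemma pendant_vertices_leg_ends: "pendant_vertices n E = leg_end ` {0, 1, 2}"
  unfolding pendant_vertices_eq leg_end_def by simp

lemma mod3_labelling_leg_ends_iff:
  assumes p: "perm3 a b c"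
  shows "mod3_labelling n E m (leg_end a) (leg_end b) (leg_end c) \<longleftrightarrow>
    (residue a = 1 \<and> residue b = 1 \<and> residue c \<noteq> 1) \<or> (residue a = 2 \<and> residue b = 0 \<and> residue c = 0)"
proof -
  have abc: "a < 3" "b < 3" "c < 3" "a \<noteq> b" "b \<noteq> c" "a \<noteq> c" using p unfolding perm3_def by auto
  have abc_set: "{a, b, c} = {0, 1, 2}"
  proof
    show "{a, b, c} \<subseteq> {0, 1, 2}" using abc(1-3) less_3_cases by blast
    show "{0, 1, 2} \<subseteq> {a, b, c}"
      using perm3_cases[OF p, of 0] perm3_cases[OF p, of 1] perm3_cases[OF p, of 2] by auto
  qed
  have "pendant_vertices n E = leg_end ` {a, b, c}" unfolding pendant_vertices_leg_ends abc_set ..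
  then have "pendant_vertices n E = {leg_end a, leg_end b, leg_end c}" by simp
  moreover have "distinct [leg_end a, leg_end b, leg_end c]"
    using leg_end_inj[OF abc(1,2)] leg_end_inj[OF abc(2,3)] leg_end_inj[OF abc(1,3)] abc(4-6) by auto
  moreover have "graph_dist E (leg_end k) m mod 3 = residue k" if "k < 3" for k
    using graph_dist_leg_end[OF that] unfolding residue_def by simp
  ultimately show ?thesis using abc(1-3) unfolding mod3_labelling_def by simp
qed

lemma mod3_labelling_leg_ends:
  assumes "mod3_labelling n E m u1 u2 u3"
  obtains a b c where "perm3 a b c" "u1 = leg_end a" "u2 = leg_end b" "u3 = leg_end c"
proof -
  have "\<exists>k<3. u = leg_end k" if "u \<in> {u1, u2, u3}" for u
  proof -
    have "u = leg_end 0 \<or> u = leg_end 1 \<or> u = leg_end 2"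
      using that assms pendant_vertices_leg_ends unfolding mod3_labelling_def by auto
    then show ?thesis
      by (metis zero_less_numeral one_less_numeral_iff semiring_norm(77) lessI numeral_2_eq_2 numeral_3_eq_3)
  qed
  then obtain a b c where "a < 3" "b < 3" "c < 3" "u1 = leg_end a" "u2 = leg_end b" "u3 = leg_end c"
    by (metis insertCI)
  moreover have "perm3 a b c" using calculation assms unfolding perm3_def mod3_labelling_def by auto
  ultimately show ?thesis using that by blast
qed

lemma residue_condition_iff_mod3_labelling:
  "residue_condition \<longleftrightarrow> (\<exists>u1 u2 u3. mod3_labelling n E m u1 u2 u3)"
proof
  assume residue_condition
  then obtain a b c where p: "perm3 a b c"
    and "(residue a = 1 \<and> residue b = 1 \<and> residue c \<noteq> 1) \<or> (residue a = 2 \<and> residue b = 0 \<and> residue c = 0)"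
    unfolding residue_condition_def by blast
  then have "mod3_labelling n E m (leg_end a) (leg_end b) (leg_end c)"
    using mod3_labelling_leg_ends_iff[OF p] by blast
  then show "\<exists>u1 u2 u3. mod3_labelling n E m u1 u2 u3" by blast
next
  assume "\<exists>u1 u2 u3. mod3_labelling n E m u1 u2 u3"
  then obtain u1 u2 u3 where labelling: "mod3_labelling n E m u1 u2 u3" by blast
  then obtain a b c where p: "perm3 a b c" and u: "u1 = leg_end a" "u2 = leg_end b" "u3 = leg_end c"
    by (rule mod3_labelling_leg_ends)
  from labelling have "mod3_labelling n E m (leg_end a) (leg_end b) (leg_end c)" unfolding u .
  with p show residue_condition
    unfolding residue_condition_def mod3_labelling_leg_ends_iff[OF p] by blast
qed

end

theorem mainTheorem10:
  fixes n :: nat and E :: "nat \<Rightarrow> nat \<Rightarrow> bool" and m :: nat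
  assumes "is_tree n E"
    and "card (pendant_vertices n E) = 3"
    and "major_vertices n E = {m}"
  shows "eig_multiplicity (laplacian n E) 1 = 1 \<longleftrightarrow>
    (\<exists>u1 u2 u3. pendant_vertices n E = {u1, u2, u3} \<and> distinct [u1, u2, u3] \<and>
      ((graph_dist E u1 m mod 3 = 1 \<and> graph_dist E u2 m mod 3 = 1 \<and> graph_dist E u3 m mod 3 \<noteq> 1)
       \<or> (graph_dist E u1 m mod 3 = 2 \<and> graph_dist E u2 m mod 3 = 0 \<and> graph_dist E u3 m mod 3 = 0)))"
proof -
  interpret unique_major_tree n E m
    using assms(1,3) by unfold_locales
  obtain leg3 len3 where "spider3 n E m leg3 len3"
    using spider3_exists[OF assms(2)] .
  then interpret spider: spider3 n E m leg3 len3 .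
  have "eig_multiplicity (laplacian n E) 1 = kernel_dim spider.laplacian_minus_id"
    unfolding eig_multiplicity_def spider.laplacian_minus_id_def
    using order_char_poly_real_symmetric[OF laplacian_carrier laplacian_symmetric, of 1] by simp
  then show ?thesis
    using spider.kernel_dim_eq_1_iff spider.residue_condition_iff_mod3_labelling
    unfolding mod3_labelling_def by simp
qed

end
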